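(* Let $m,n,n_i,r$ be positive integers with $n_i\le n$, $\rho>0$, $\lambda>0$, $M_i\in\mathbb R^{m\times n_i}$. For $U\in\mathbb R^{m\times r}$, $V\in\mathbb R^{n_i\times r}$, $S\in\mathbb R^{m\times n_i}$ let $$\mathcal L_i(U,V,S)=\frac12\|UV^T+S-M_i\|_F^2+\frac{\rho}{2}\Big(\|V\|_F^2+\frac{n_i}{n}\|U\|_F^2\Big)+\lambda\|S\|_1,$$ and $g_i(U)=\inf_{V,S}\mathcal L_i(U,V,S)$. Assume the standing boundedness assumption described in the context. Then $g_i$ is differentiable and, for every $U$, $$\nabla_U g_i(U)=\nabla_U\mathcal L_i(U,V_i^*,S_i^* ),$$ where $(V_i^*,S_i^* )=\arg\min_{V,S}\mathcal L_i(U,V,S)$ is the (unique) minimizer for this $U$.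
   Context: $\|S\|_1=\sum_{jk}|S_{jk}|$. Standing assumption (bounded variables): there are constants $C_U,C_V,C_S,C_M$ such that all matrices considered satisfy $\|U\|_F\le C_U$, $\|V\|_F\le C_V$, $\|S\|_F\le C_S$, $\|M_i\|_F\le C_M$ (in particular the minimizers $V_i^*,S_i^*$ obey these bounds). *)

theory Defs
  imports "HOL-Analysis.Analysis"
begin

text \<open>Matrices are typed: U :: real^'r^'m (m x r), V :: real^'r^'k (n_i x r),
  S, M :: real^'k^'m (m x n_i); n_i = CARD('k). The norm on real^'b^'a is the
  Frobenius norm.\<close>

definition l1norm :: "real^'k^'m \<Rightarrow> real" where
  "l1norm S = (\<Sum>j\<in>UNIV. \<Sum>k\<in>UNIV. \<bar>S $ j $ k\<bar>)"

definition lossL :: "nat \<Rightarrow> real \<Rightarrow> real \<Rightarrow> real^'k^'m \<Rightarrow>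
    real^'r^'m \<Rightarrow> real^'r^'k \<Rightarrow> real^'k^'m \<Rightarrow> real" where
  "lossL n rho lam M U V S =
     (1/2) * (norm (U ** transpose V + S - M))\<^sup>2
     + (rho/2) * ((norm V)\<^sup>2 + (real CARD('k) / real n) * (norm U)\<^sup>2)
     + lam * l1norm S"

definition gfun :: "nat \<Rightarrow> real \<Rightarrow> real \<Rightarrow> real^'k^'m \<Rightarrow> real^'r^'m \<Rightarrow> real" where
  "gfun n rho lam M U =
     Inf {lossL n rho lam M U V S | (V :: real^'r^'k) S. True}"

definition is_minimizer :: "nat \<Rightarrow> real \<Rightarrow> real \<Rightarrow> real^'k^'m \<Rightarrow> real^'r^'m \<Rightarrow>
    real^'r^'k \<Rightarrow> real^'k^'m \<Rightarrow> bool" where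
  "is_minimizer n rho lam M U V S \<longleftrightarrow>
     (\<forall>V' S'. lossL n rho lam M U V S \<le> lossL n rho lam M U V' S')"

end

(*
  For fixed U the loss is, up to the convex term lam * |S|_1, a strongly convex quadratic in the
  pair (U V^T + S, V).  Comparing with midpoints (parallelogram law) shows that it grows at least
  like m d^2 away from a minimiser (V0, S0), where d = |U V^T + S - (U V0^T + S0)| + |V - V0|.
  Hence minimisers exist (by coercivity), are unique, and are uniformly bounded for U' near U.
  In U the loss is a quadratic polynomial: L(U + H) = L(U) + DL(U) H + R with 0 <= R = O(|H|^2).
  An envelope argument then yields g(U + H) = g(U) + DL(U, V0, S0) H + O(|H|^2): testing with
  (V0, S0) bounds g(U + H) from above; for the minimiser (V, S) at U + H the derivatives
  DL(U, V, S) and DL(U, V0, S0) differ by O(d |H|), which the growth term m d^2 absorbs after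
  completing the square.
*)

theory Submission
  imports Defs
begin

lemma has_derivative_quadratic_remainder:
  fixes f :: "'a::real_normed_vector \<Rightarrow> real"
  assumes "bounded_linear f'"
    and remainder: "\<And>y. norm (y - x) \<le> 1 \<Longrightarrow> \<bar>f y - f x - f' (y - x)\<bar> \<le> K * (norm (y - x))\<^sup>2"
  shows "(f has_derivative f') (at x)"
  unfolding has_derivative_at_alt
proof (intro conjI assms allI impI)
  fix e :: real assume "e > 0"
  define d where "d = min 1 (e / (\<bar>K\<bar> + 1))"
  have "d > 0" using \<open>e > 0\<close> by (simp add: d_def)
  moreover have "norm (f y - f x - f' (y - x)) \<le> e * norm (y - x)" if "norm (y - x) < d" for y
  proof -
    define h where "h = norm (y - x)"
    have "h \<ge> 0" "h \<le> 1" "h * (\<bar>K\<bar> + 1) \<le> e"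
      using that by (auto simp: h_def d_def field_simps)
    then have "\<bar>K\<bar> * h \<le> e"
      by (simp add: algebra_simps)
    have "\<bar>f y - f x - f' (y - x)\<bar> \<le> K * h\<^sup>2"
      using remainder \<open>h \<le> 1\<close> by (simp add: h_def)
    also have "\<dots> \<le> (\<bar>K\<bar> * h) * h"
      using \<open>h \<ge> 0\<close> by (simp add: power2_eq_square mult_right_mono mult.assoc[symmetric])
    also have "\<dots> \<le> e * h"
      using \<open>\<bar>K\<bar> * h \<le> e\<close> \<open>h \<ge> 0\<close> by (rule mult_right_mono)
    finally show ?thesis by (simp add: h_def)
  qed
  ultimately show "\<exists>d>0. \<forall>y. norm (y - x) < d \<longrightarrow> norm (f y - f x - f' (y - x)) \<le> e * norm (y - x)"
    by blast
qed

text \<open>Envelope (Danskin) theorem, with quadratic growth of \<open>f x\<close> at its minimiser \<open>p0\<close>,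
  measured by \<open>d\<close>, in place of compactness of the parameter set.\<close>

lemma has_derivative_value_function:
  fixes g :: "'a::real_normed_vector \<Rightarrow> real" and f :: "'a \<Rightarrow> 'p \<Rightarrow> real"
    and D :: "'p \<Rightarrow> 'a \<Rightarrow> real" and d :: "'p \<Rightarrow> real"
  assumes "bounded_linear (D p0)" and "m > 0"
    and value_at: "g x = f x p0"
    and growth: "\<And>q. f x p0 + m * (d q)\<^sup>2 \<le> f x q"
    and below_tangent: "\<And>y q. f x q + D q (y - x) \<le> f y q"
    and above_tangent: "\<And>y. f y p0 \<le> f x p0 + D p0 (y - x) + K * (norm (y - x))\<^sup>2"
    and lower: "\<And>y q. g y \<le> f y q"
    and attained: "\<And>y. norm (y - x) \<le> 1 \<Longrightarrow>
      \<exists>q. g y = f y q \<and> (\<forall>h. \<bar>D q h - D p0 h\<bar> \<le> A * d q * norm h)"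
  shows "(g has_derivative D p0) (at x)"
proof (rule has_derivative_quadratic_remainder[OF \<open>bounded_linear (D p0)\<close>, where K = "\<bar>K\<bar> + A\<^sup>2 / (4 * m)"])
  fix y assume "norm (y - x) \<le> 1"
  define h where "h = norm (y - x)"
  define r where "r = g y - g x - D p0 (y - x)"
  have "r \<le> K * h\<^sup>2"
    using lower[of y p0] above_tangent[of y] value_at by (simp add: r_def h_def)
  moreover have "- (A\<^sup>2 / (4 * m) * h\<^sup>2) \<le> r"
  proof -
    obtain q where q: "g y = f y q" and lip: "\<bar>D q (y - x) - D p0 (y - x)\<bar> \<le> A * d q * h"
      using attained[OF \<open>norm (y - x) \<le> 1\<close>] unfolding h_def by blast
    have "m * (d q)\<^sup>2 - A * d q * h \<le> r"
      using below_tangent[of q y] growth[of q] value_at q lip by (simp add: r_def abs_le_iff)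
    \<comment> \<open>complete the square in \<open>d q\<close>\<close>
    moreover have "m * (d q)\<^sup>2 - A * d q * h + A\<^sup>2 / (4 * m) * h\<^sup>2 = (2 * m * d q - A * h)\<^sup>2 / (4 * m)"
      using \<open>m > 0\<close> by (simp add: field_simps power2_eq_square)
    moreover have "0 \<le> (2 * m * d q - A * h)\<^sup>2 / (4 * m)"
      using \<open>m > 0\<close> by simp
    ultimately show ?thesis by linarith
  qed
  moreover have "K * h\<^sup>2 \<le> \<bar>K\<bar> * h\<^sup>2"
    by (rule mult_right_mono) simp_all
  moreover have "0 \<le> \<bar>K\<bar> * h\<^sup>2" "0 \<le> A\<^sup>2 / (4 * m) * h\<^sup>2"
    using \<open>m > 0\<close> by simp_all
  ultimately have "\<bar>r\<bar> \<le> (\<bar>K\<bar> + A\<^sup>2 / (4 * m)) * h\<^sup>2"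
    unfolding abs_le_iff distrib_right by (intro conjI) linarith+
  then show "\<bar>g y - g x - D p0 (y - x)\<bar> \<le> (\<bar>K\<bar> + A\<^sup>2 / (4 * m)) * (norm (y - x))\<^sup>2"
    by (simp add: r_def h_def)
qed

lemma continuous_attains_min_of_bounded_sublevel:
  fixes f :: "'a::heine_borel \<Rightarrow> real"
  assumes "continuous_on UNIV f" and "bounded {p. f p \<le> f a}"
  shows "\<exists>p. \<forall>q. f p \<le> f q"
proof -
  have "compact {p. f p \<le> f a}"
    using assms by (simp add: compact_eq_bounded_closed closed_Collect_le continuous_on_const)
  moreover have "continuous_on {p. f p \<le> f a} f"
    using assms(1) by (rule continuous_on_subset) simp
  ultimately obtain p where "f p \<le> f a" and "\<forall>q. f q \<le> f a \<longrightarrow> f p \<le> f q"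
    using continuous_attains_inf[of "{p. f p \<le> f a}" f] by auto
  then show ?thesis by (meson linear order_trans)
qed

lemma power2_norm_add:
  "(norm (x + y :: 'a::real_inner))\<^sup>2 = (norm x)\<^sup>2 + 2 * (x \<bullet> y) + (norm y)\<^sup>2"
  by (simp add: power2_norm_eq_inner inner_add_left inner_add_right inner_commute)

lemma power2_norm_midpoint:
  "(norm ((1/2) *\<^sub>R (x + y) :: 'a::real_inner))\<^sup>2
     = (1/2) * (norm x)\<^sup>2 + (1/2) * (norm y)\<^sup>2 - (1/4) * (norm (x - y))\<^sup>2"
  by (simp add: power2_norm_eq_inner inner_add_left inner_add_right inner_diff_left
      inner_diff_right inner_commute algebra_simps)

lemma power2_norm_vec_eq_sum: "(norm (x::'a::real_inner^'n))\<^sup>2 = (\<Sum>i\<in>UNIV. (norm (x $ i))\<^sup>2)"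
  by (simp add: power2_norm_eq_inner inner_vec_def)

lemma matrix_mult_transpose_nth: "(A ** transpose V) $ i $ j = A $ i \<bullet> V $ j"
  by (simp add: matrix_matrix_mult_def transpose_def inner_vec_def)

lemma norm_matrix_mult_transpose_le:
  fixes A :: "real^'r^'m" and V :: "real^'r^'k"
  shows "norm (A ** transpose V) \<le> norm A * norm V"
proof -
  have "(norm (A ** transpose V))\<^sup>2 = (\<Sum>i\<in>UNIV. \<Sum>j\<in>UNIV. (A $ i \<bullet> V $ j)\<^sup>2)"
    by (simp add: power2_norm_vec_eq_sum matrix_mult_transpose_nth)
  also have "\<dots> \<le> (\<Sum>i\<in>UNIV. \<Sum>j\<in>UNIV. (norm (A $ i))\<^sup>2 * (norm (V $ j))\<^sup>2)"
  proof (intro sum_mono)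
    fix i j
    have "\<bar>A $ i \<bullet> V $ j\<bar> \<le> norm (A $ i) * norm (V $ j)"
      by (rule Cauchy_Schwarz_ineq2)
    then have "\<bar>A $ i \<bullet> V $ j\<bar>\<^sup>2 \<le> (norm (A $ i) * norm (V $ j))\<^sup>2"
      by (rule power_mono) simp
    then show "(A $ i \<bullet> V $ j)\<^sup>2 \<le> (norm (A $ i))\<^sup>2 * (norm (V $ j))\<^sup>2"
      by (simp add: power_mult_distrib)
  qed
  also have "\<dots> = (norm A * norm V)\<^sup>2"
    by (simp add: power2_norm_vec_eq_sum[of A] power2_norm_vec_eq_sum[of V] sum_product power_mult_distrib)
  finally show ?thesis
    by (rule power2_le_imp_le) simp
qed

interpretation mult_transpose: bounded_bilinear "\<lambda>(A::real^'r^'m) (V::real^'r^'k). A ** transpose V"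
proof unfold_locales
  show "\<exists>K. \<forall>(A::real^'r^'m) (V::real^'r^'k). norm (A ** transpose V) \<le> norm A * norm V * K"
    by (metis mult.right_neutral norm_matrix_mult_transpose_le)
qed (simp_all add: vec_eq_iff matrix_mult_transpose_nth inner_add_left inner_add_right)

lemma l1norm_triangle: "l1norm (S + T) \<le> l1norm S + l1norm T"
  unfolding l1norm_def sum.distrib[symmetric] by (intro sum_mono) (simp add: abs_triangle_ineq)

lemma l1norm_scaleR: "l1norm (c *\<^sub>R S) = \<bar>c\<bar> * l1norm S"
  by (simp add: l1norm_def sum_distrib_left abs_mult)

lemma norm_le_l1norm: "norm S \<le> l1norm S"
proof -
  have "norm S \<le> (\<Sum>j\<in>UNIV. norm (S $ j))"
    unfolding norm_vec_def by (rule L2_set_le_sum) auto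
  also have "\<dots> \<le> l1norm S"
    unfolding l1norm_def by (intro sum_mono norm_le_l1_cart)
  finally show ?thesis .
qed

lemma continuous_on_l1norm [continuous_intros]:
  "continuous_on A f \<Longrightarrow> continuous_on A (\<lambda>x. l1norm (f x))"
  unfolding l1norm_def by (intro continuous_intros)

definition lossL_deriv :: "nat \<Rightarrow> real \<Rightarrow> real^'k^'m \<Rightarrow> real^'r^'m \<Rightarrow> real^'r^'k \<Rightarrow>
    real^'k^'m \<Rightarrow> real^'r^'m \<Rightarrow> real" where
  "lossL_deriv n rho M U V S H =
     (U ** transpose V + S - M) \<bullet> (H ** transpose V) + rho * (real CARD('k) / real n) * (U \<bullet> H)"

lemma bounded_linear_lossL_deriv: "bounded_linear (lossL_deriv n rho M U V S)"
  unfolding lossL_deriv_def[abs_def]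
  by (intro bounded_linear_add bounded_linear_compose[OF bounded_linear_inner_right]
      mult_transpose.bounded_linear_left bounded_linear_compose[OF bounded_linear_mult_right]
      bounded_linear_inner_right)

lemma lossL_add_expansion:
  fixes S :: "real^'k^'m"
  shows "lossL n rho lam M (U + H) V S = lossL n rho lam M U V S + lossL_deriv n rho M U V S H
     + ((1/2) * (norm (H ** transpose V))\<^sup>2 + (rho/2) * (real CARD('k) / real n) * (norm H)\<^sup>2)"
proof -
  have residual: "(U + H) ** transpose V + S - M = (U ** transpose V + S - M) + H ** transpose V"
    by (simp add: mult_transpose.add_left algebra_simps)
  show ?thesis
    unfolding lossL_def lossL_deriv_def residual
      power2_norm_add[of "U ** transpose V + S - M"] power2_norm_add[of U H]
    by (simp add: algebra_simps)
qed

lemma lossL_remainder_bounds: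
  fixes S :: "real^'k^'m"
  shows "\<bar>lossL n rho lam M (U + H) V S - lossL n rho lam M U V S - lossL_deriv n rho M U V S H\<bar>
      \<le> ((norm V)\<^sup>2 + \<bar>rho\<bar> * (real CARD('k) / real n)) / 2 * (norm H)\<^sup>2" (is "\<bar>?R\<bar> \<le> _")
    and "rho \<ge> 0 \<Longrightarrow> lossL n rho lam M U V S + lossL_deriv n rho M U V S H \<le> lossL n rho lam M (U + H) V S"
    and "rho \<ge> 0 \<Longrightarrow> lossL n rho lam M (U + H) V S \<le> lossL n rho lam M U V S + lossL_deriv n rho M U V S H
      + ((norm V)\<^sup>2 + rho * (real CARD('k) / real n)) / 2 * (norm H)\<^sup>2"
proof -
  define c where "c = real CARD('k) / real n"
  have R: "?R = (1/2) * (norm (H ** transpose V))\<^sup>2 + (rho/2) * c * (norm H)\<^sup>2"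
    unfolding c_def lossL_add_expansion by simp
  have "\<bar>?R\<bar> \<le> (1/2) * (norm (H ** transpose V))\<^sup>2 + \<bar>rho\<bar> * c / 2 * (norm H)\<^sup>2"
    unfolding R by (rule abs_triangle_ineq[THEN order_trans]) (simp add: c_def abs_mult)
  also have "\<dots> \<le> (1/2) * (norm H * norm V)\<^sup>2 + \<bar>rho\<bar> * c / 2 * (norm H)\<^sup>2"
    using power_mono[OF norm_matrix_mult_transpose_le norm_ge_zero, of H V 2] by simp
  also have "\<dots> = ((norm V)\<^sup>2 + \<bar>rho\<bar> * c) / 2 * (norm H)\<^sup>2"
    by (simp add: power_mult_distrib algebra_simps)
  finally show abs_bound: "\<bar>?R\<bar> \<le> ((norm V)\<^sup>2 + \<bar>rho\<bar> * (real CARD('k) / real n)) / 2 * (norm H)\<^sup>2"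
    unfolding c_def .
  assume "rho \<ge> 0"
  then have "0 \<le> ?R"
    unfolding R by (simp add: c_def)
  then show "lossL n rho lam M U V S + lossL_deriv n rho M U V S H \<le> lossL n rho lam M (U + H) V S"
    by linarith
  from abs_le_D1[OF abs_bound] abs_of_nonneg[OF \<open>rho \<ge> 0\<close>]
  show "lossL n rho lam M (U + H) V S \<le> lossL n rho lam M U V S + lossL_deriv n rho M U V S H
      + ((norm V)\<^sup>2 + rho * (real CARD('k) / real n)) / 2 * (norm H)\<^sup>2"
    by (simp only:)
qed

lemma lossL_has_derivative:
  fixes S :: "real^'k^'m"
  shows "((\<lambda>U. lossL n rho lam M U V S) has_derivative lossL_deriv n rho M U V S) (at U)"
proof (rule has_derivative_quadratic_remainder[OF bounded_linear_lossL_deriv,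
    where K = "((norm V)\<^sup>2 + \<bar>rho\<bar> * (real CARD('k) / real n)) / 2"])
  fix y
  show "\<bar>lossL n rho lam M y V S - lossL n rho lam M U V S - lossL_deriv n rho M U V S (y - U)\<bar>
      \<le> ((norm V)\<^sup>2 + \<bar>rho\<bar> * (real CARD('k) / real n)) / 2 * (norm (y - U))\<^sup>2"
    using lossL_remainder_bounds(1)[of n rho lam M U "y - U" V S] by simp
qed

lemma lossL_deriv_diff_le:
  fixes U :: "real^'r^'m" and V V0 :: "real^'r^'k"
  shows "\<bar>lossL_deriv n rho M U V S H - lossL_deriv n rho M U V0 S0 H\<bar>
    \<le> (norm V + norm (U ** transpose V0 + S0 - M))
      * (norm (U ** transpose V + S - (U ** transpose V0 + S0)) + norm (V - V0)) * norm H"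
proof -
  define X0 where "X0 = U ** transpose V0 + S0 - M"
  define dX where "dX = norm (U ** transpose V + S - (U ** transpose V0 + S0))"
  define dV where "dV = norm (V - V0)"
  have "lossL_deriv n rho M U V S H - lossL_deriv n rho M U V0 S0 H
      = (U ** transpose V + S - (U ** transpose V0 + S0)) \<bullet> (H ** transpose V)
        + X0 \<bullet> (H ** transpose (V - V0))"
    by (simp add: lossL_deriv_def X0_def mult_transpose.diff_right inner_diff_left inner_diff_right)
  also have "\<bar>\<dots>\<bar> \<le> dX * (norm H * norm V) + norm X0 * (norm H * dV)"
    unfolding dX_def dV_def
    by (intro abs_triangle_ineq[THEN order_trans] add_mono
        Cauchy_Schwarz_ineq2[THEN order_trans] mult_left_mono norm_matrix_mult_transpose_le norm_ge_zero)
  also have "\<dots> \<le> (norm V + norm X0) * (dX + dV) * norm H"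
    unfolding dX_def dV_def by (simp add: algebra_simps mult_left_mono mult_right_mono)
  finally show ?thesis by (simp add: X0_def dX_def dV_def)
qed

lemma lossL_quadratic_growth:
  fixes U :: "real^'r^'m" and V V0 :: "real^'r^'k"
  assumes "lam \<ge> 0" and "is_minimizer n rho lam M U V0 S0"
  shows "(norm (U ** transpose V + S - (U ** transpose V0 + S0)))\<^sup>2 + rho * (norm (V - V0))\<^sup>2
    \<le> 4 * (lossL n rho lam M U V S - lossL n rho lam M U V0 S0)"
proof -
  define c where "c = real CARD('k) / real n"
  define X X0 where "X = U ** transpose V + S - M" and "X0 = U ** transpose V0 + S0 - M"
  \<comment> \<open>the minimiser beats the midpoint of \<open>(V, S)\<close> and \<open>(V0, S0)\<close>\<close>
  define Vm Sm where "Vm = (1/2) *\<^sub>R (V + V0)" and "Sm = (1/2) *\<^sub>R (S + S0)"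
  have "U ** transpose Vm + Sm - M = (1/2) *\<^sub>R (X + X0)"
    by (simp add: vec_eq_iff X_def X0_def Vm_def Sm_def matrix_mult_transpose_nth inner_add_right
        field_simps)
  then have "lossL n rho lam M U Vm Sm
      = (norm X)\<^sup>2 / 4 + (norm X0)\<^sup>2 / 4 - (norm (X - X0))\<^sup>2 / 8
        + rho * (norm V)\<^sup>2 / 4 + rho * (norm V0)\<^sup>2 / 4 - rho * (norm (V - V0))\<^sup>2 / 8
        + rho * c * (norm U)\<^sup>2 / 2 + lam * l1norm Sm"
    unfolding lossL_def c_def by (simp only: Vm_def power2_norm_midpoint) (simp add: algebra_simps)
  moreover have "lossL n rho lam M U V S
      = (norm X)\<^sup>2 / 2 + rho * (norm V)\<^sup>2 / 2 + rho * c * (norm U)\<^sup>2 / 2 + lam * l1norm S"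
    and "lossL n rho lam M U V0 S0
      = (norm X0)\<^sup>2 / 2 + rho * (norm V0)\<^sup>2 / 2 + rho * c * (norm U)\<^sup>2 / 2 + lam * l1norm S0"
    by (simp_all add: lossL_def X_def X0_def c_def algebra_simps)
  moreover have "lam * l1norm Sm \<le> lam * l1norm S / 2 + lam * l1norm S0 / 2"
  proof -
    have "l1norm Sm \<le> l1norm S / 2 + l1norm S0 / 2"
      using l1norm_triangle[of S S0] unfolding Sm_def l1norm_scaleR by simp
    from mult_left_mono[OF this \<open>lam \<ge> 0\<close>] show ?thesis
      by (simp add: distrib_left)
  qed
  moreover have "lossL n rho lam M U V0 S0 \<le> lossL n rho lam M U Vm Sm"
    using assms(2) unfolding is_minimizer_def by blast
  moreover have residual_diff: "U ** transpose V + S - (U ** transpose V0 + S0) = X - X0"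
    by (simp add: X_def X0_def)
  ultimately show ?thesis
    unfolding right_diff_distrib residual_diff by linarith
qed

lemma lossL_quadratic_growth_dist:
  fixes U :: "real^'r^'m" and V V0 :: "real^'r^'k"
  assumes "rho > 0" and "lam \<ge> 0" and "is_minimizer n rho lam M U V0 S0"
  shows "lossL n rho lam M U V0 S0
      + min 1 rho / 8 * (norm (U ** transpose V + S - (U ** transpose V0 + S0)) + norm (V - V0))\<^sup>2
    \<le> lossL n rho lam M U V S"
proof -
  define a b where "a = norm (U ** transpose V + S - (U ** transpose V0 + S0))"
    and "b = norm (V - V0)"
  have "min 1 rho / 8 * (a + b)\<^sup>2 \<le> min 1 rho / 8 * (2 * a\<^sup>2 + 2 * b\<^sup>2)"
    using sum_squares_bound[of a b] \<open>rho > 0\<close> by (intro mult_left_mono) (simp_all add: power2_sum)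
  also have "\<dots> = min 1 rho * a\<^sup>2 / 4 + min 1 rho * b\<^sup>2 / 4"
    by (simp add: algebra_simps)
  also have "\<dots> \<le> a\<^sup>2 / 4 + rho * b\<^sup>2 / 4"
  proof -
    have "min 1 rho * a\<^sup>2 \<le> 1 * a\<^sup>2" and "min 1 rho * b\<^sup>2 \<le> rho * b\<^sup>2"
      by (intro mult_right_mono min.cobounded1 min.cobounded2 zero_le_power2)+
    then show ?thesis by linarith
  qed
  also have "\<dots> \<le> lossL n rho lam M U V S - lossL n rho lam M U V0 S0"
    using lossL_quadratic_growth[OF assms(2,3), of V S]
    unfolding a_def b_def right_diff_distrib by linarith
  finally show ?thesis
    unfolding a_def b_def by simp
qed

lemma lossL_lower_bounds:
  fixes S :: "real^'k^'m"
  assumes "rho \<ge> 0" and "lam \<ge> 0"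
  shows "rho / 2 * (norm V)\<^sup>2 \<le> lossL n rho lam M U V S"
    and "lam * norm S \<le> lossL n rho lam M U V S"
proof -
  have "0 \<le> rho / 2 * (real CARD('k) / real n * (norm U)\<^sup>2)" "0 \<le> rho / 2 * (norm V)\<^sup>2"
    "lam * norm S \<le> lam * l1norm S" "0 \<le> lam * norm S"
    "0 \<le> 1/2 * (norm (U ** transpose V + S - M))\<^sup>2"
    using assms by (simp_all add: mult_left_mono norm_le_l1norm)
  then show "rho / 2 * (norm V)\<^sup>2 \<le> lossL n rho lam M U V S"
    and "lam * norm S \<le> lossL n rho lam M U V S"
    unfolding lossL_def distrib_left by linarith+
qed

lemma lossL_minimizer_exists:
  fixes M :: "real^'k^'m" and U :: "real^'r^'m"
  assumes "rho > 0" and "lam > 0"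
  shows "\<exists>(V::real^'r^'k) S. is_minimizer n rho lam M U V S"
proof -
  define F where "F p = lossL n rho lam M U (fst p) (snd p)" for p :: "(real^'r^'k) \<times> (real^'k^'m)"
  have "continuous_on UNIV F"
    unfolding F_def[abs_def] lossL_def by (intro continuous_intros mult_transpose.continuous_on)
  moreover have "bounded {p. F p \<le> F 0}"
    unfolding bounded_iff
  proof (intro exI allI impI ballI)
    fix p assume "p \<in> {p. F p \<le> F 0}"
    moreover have "rho / 2 * (norm (fst p))\<^sup>2 \<le> F p"
      unfolding F_def using assms by (intro lossL_lower_bounds(1)) simp_all
    moreover have "lam * norm (snd p) \<le> F p"
      unfolding F_def using assms by (intro lossL_lower_bounds(2)) simp_all
    ultimately have "rho / 2 * (norm (fst p))\<^sup>2 \<le> F 0" and "lam * norm (snd p) \<le> F 0"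
      by simp_all
    then have "norm (fst p) \<le> sqrt (2 * F 0 / rho)" and "norm (snd p) \<le> F 0 / lam"
      using assms by (auto intro!: real_le_rsqrt simp: field_simps)
    then show "norm p \<le> sqrt (2 * F 0 / rho) + F 0 / lam"
      using norm_Pair_le[of "fst p" "snd p"] by simp
  qed
  ultimately obtain p where "\<forall>q. F p \<le> F q"
    using continuous_attains_min_of_bounded_sublevel by blast
  then have "is_minimizer n rho lam M U (fst p) (snd p)"
    unfolding is_minimizer_def F_def by (metis fst_conv snd_conv)
  then show ?thesis by blast
qed

lemma lossL_minimizer_unique:
  fixes U :: "real^'r^'m" and V V' :: "real^'r^'k"
  assumes "rho > 0" and "lam \<ge> 0"
    and "is_minimizer n rho lam M U V S" and "is_minimizer n rho lam M U V' S'"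
  shows "V' = V \<and> S' = S"
proof -
  define a b where "a = norm (U ** transpose V' + S' - (U ** transpose V + S))"
    and "b = norm (V' - V)"
  have "lossL n rho lam M U V' S' \<le> lossL n rho lam M U V S"
    using assms(4) unfolding is_minimizer_def by blast
  then have "min 1 rho / 8 * (a + b)\<^sup>2 \<le> 0"
    using lossL_quadratic_growth_dist[OF assms(1-3), of V' S'] unfolding a_def b_def by linarith
  then have "a + b = 0"
    using \<open>rho > 0\<close> by (simp add: mult_le_0_iff min_le_iff_disj)
  then have "V' = V" and "U ** transpose V' + S' = U ** transpose V + S"
    unfolding a_def b_def by (auto simp: add_nonneg_eq_0_iff)
  then show ?thesis
    by auto
qed

lemma lossL_minimizer_norm_le:
  fixes M :: "real^'k^'m" and U :: "real^'r^'m"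
  assumes "rho > 0" and "lam \<ge> 0" and "is_minimizer n rho lam M U V S" and "norm U \<le> R"
  shows "norm V \<le> sqrt ((norm M)\<^sup>2 / rho + real CARD('k) / real n * R\<^sup>2)"
proof (rule real_le_rsqrt)
  have "rho / 2 * (norm V)\<^sup>2 \<le> lossL n rho lam M U V S"
    using assms by (intro lossL_lower_bounds) auto
  also have "\<dots> \<le> lossL n rho lam M U 0 0"
    using assms(3) unfolding is_minimizer_def by blast
  also have "\<dots> = (norm M)\<^sup>2 / 2 + rho / 2 * (real CARD('k) / real n * (norm U)\<^sup>2)"
    by (simp add: lossL_def l1norm_def mult_transpose.zero_right)
  also have "\<dots> \<le> (norm M)\<^sup>2 / 2 + rho / 2 * (real CARD('k) / real n * R\<^sup>2)"
    using assms(1,4) by (intro add_left_mono mult_left_mono power_mono) simp_all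
  finally show "(norm V)\<^sup>2 \<le> (norm M)\<^sup>2 / rho + real CARD('k) / real n * R\<^sup>2"
    using \<open>rho > 0\<close> by (simp add: field_simps)
qed

lemma lossL_deriv_diff_le_near:
  fixes M :: "real^'k^'m" and U y :: "real^'r^'m" and V V0 :: "real^'r^'k"
  assumes "rho > 0" and "lam \<ge> 0" and "is_minimizer n rho lam M y V S" and "norm (y - U) \<le> 1"
  shows "\<bar>lossL_deriv n rho M U V S h - lossL_deriv n rho M U V0 S0 h\<bar>
    \<le> (sqrt ((norm M)\<^sup>2 / rho + real CARD('k) / real n * (norm U + 1)\<^sup>2) + norm (U ** transpose V0 + S0 - M))
      * (norm (U ** transpose V + S - (U ** transpose V0 + S0)) + norm (V - V0)) * norm h"
proof -
  have "norm y \<le> norm U + 1"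
    using norm_triangle_sub[of y U] assms(4) by simp
  from lossL_minimizer_norm_le[OF assms(1-3) this]
  show ?thesis
    by (intro order_trans[OF lossL_deriv_diff_le] mult_right_mono add_right_mono add_nonneg_nonneg norm_ge_zero)
qed

lemma gfun_eq_lossL_minimizer:
  assumes "is_minimizer n rho lam M U V S"
  shows "gfun n rho lam M U = lossL n rho lam M U V S"
  unfolding gfun_def
  by (rule cInf_eq_minimum) (use assms in \<open>auto simp: is_minimizer_def\<close>)

lemma gfun_le_lossL:
  fixes M :: "real^'k^'m" and U :: "real^'r^'m" and V :: "real^'r^'k"
  assumes "rho > 0" and "lam > 0"
  shows "gfun n rho lam M U \<le> lossL n rho lam M U V S"
  using lossL_minimizer_exists[OF assms] gfun_eq_lossL_minimizer
  unfolding is_minimizer_def by metis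

lemma gfun_has_derivative:
  fixes M :: "real^'k^'m" and U :: "real^'r^'m" and V0 :: "real^'r^'k"
  assumes "rho > 0" and "lam > 0" and min: "is_minimizer n rho lam M U V0 S0"
  shows "(gfun n rho lam M has_derivative lossL_deriv n rho M U V0 S0) (at U)"
proof -
  define c where "c = real CARD('k) / real n"
  define f where "f y p = lossL n rho lam M y (fst p) (snd p)"
    for y :: "real^'r^'m" and p :: "(real^'r^'k) \<times> (real^'k^'m)"
  define D where "D p = lossL_deriv n rho M U (fst p) (snd p)" for p :: "(real^'r^'k) \<times> (real^'k^'m)"
  define d where "d p = norm (U ** transpose (fst p) + snd p - (U ** transpose V0 + S0)) + norm (fst p - V0)"
    for p :: "(real^'r^'k) \<times> (real^'k^'m)"
  define A where "A = sqrt ((norm M)\<^sup>2 / rho + c * (norm U + 1)\<^sup>2) + norm (U ** transpose V0 + S0 - M)"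
  have "(gfun n rho lam M has_derivative D (V0, S0)) (at U)"
  proof (rule has_derivative_value_function[where f = f and d = d and m = "min 1 rho / 8"
        and K = "((norm V0)\<^sup>2 + rho * c) / 2" and A = A])
    show "bounded_linear (D (V0, S0))" and "0 < min 1 rho / 8"
      using \<open>rho > 0\<close> unfolding D_def by (simp_all add: bounded_linear_lossL_deriv)
    show "gfun n rho lam M U = f U (V0, S0)"
      unfolding f_def using min by (simp add: gfun_eq_lossL_minimizer)
    show "f U (V0, S0) + min 1 rho / 8 * (d q)\<^sup>2 \<le> f U q" for q
      using lossL_quadratic_growth_dist[OF assms(1) less_imp_le[OF assms(2)] min]
      unfolding f_def d_def by simp
    show "f U q + D q (y - U) \<le> f y q" for y q
      using lossL_remainder_bounds(2)[of rho n lam M U "fst q" "snd q" "y - U"] \<open>rho > 0\<close>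
      unfolding f_def D_def by simp
    show "f y (V0, S0) \<le> f U (V0, S0) + D (V0, S0) (y - U) + ((norm V0)\<^sup>2 + rho * c) / 2 * (norm (y - U))\<^sup>2"
      for y
      using lossL_remainder_bounds(3)[of rho n lam M U "y - U" V0 S0] \<open>rho > 0\<close>
      unfolding f_def D_def c_def by simp
    show "gfun n rho lam M y \<le> f y q" for y q
      unfolding f_def using assms(1,2) by (rule gfun_le_lossL)
    show "\<exists>q. gfun n rho lam M y = f y q \<and> (\<forall>h. \<bar>D q h - D (V0, S0) h\<bar> \<le> A * d q * norm h)"
      if "norm (y - U) \<le> 1" for y
    proof -
      obtain V S where min_y: "is_minimizer n rho lam M y V S"
        using lossL_minimizer_exists[OF assms(1,2)] by blast
      then have "gfun n rho lam M y = f y (V, S)"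
        unfolding f_def by (simp add: gfun_eq_lossL_minimizer)
      moreover have "\<bar>D (V, S) h - D (V0, S0) h\<bar> \<le> A * d (V, S) * norm h" for h
        using lossL_deriv_diff_le_near[OF assms(1) less_imp_le[OF assms(2)] min_y that]
        unfolding A_def D_def c_def d_def by simp
      ultimately show ?thesis by blast
    qed
  qed
  then show ?thesis
    by (simp add: D_def)
qed

theorem lemma2:
  fixes n :: nat and rho lam CU CV CS CM :: real
    and M :: "real^'k^'m"
  assumes "CARD('k) \<le> n"
    and "rho > 0" and "lam > 0"
    and "norm M \<le> CM"
    and "\<And>U' :: real^'r^'m. \<And>V S. norm U' \<le> CU \<Longrightarrow>
            is_minimizer n rho lam M U' V S \<Longrightarrow> norm V \<le> CV \<and> norm S \<le> CS"
  shows "\<forall>U :: real^'r^'m. norm U \<le> CU \<longrightarrow>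
           gfun n rho lam M differentiable (at U)
         \<and> (\<exists>!VS. is_minimizer n rho lam M U (fst VS) (snd VS))
         \<and> (\<forall>V S. is_minimizer n rho lam M U V S \<longrightarrow>
               (\<lambda>U'. lossL n rho lam M U' V S) differentiable (at U)
             \<and> (gfun n rho lam M has_derivative
                  frechet_derivative (\<lambda>U'. lossL n rho lam M U' V S) (at U)) (at U))"
proof (intro allI impI conjI)
  fix U :: "real^'r^'m"
  obtain V0 S0 where min: "is_minimizer n rho lam M U V0 S0"
    using lossL_minimizer_exists[OF assms(2,3)] by blast
  show "gfun n rho lam M differentiable (at U)"
    using gfun_has_derivative[OF assms(2,3) min] by (rule differentiableI)
  show "\<exists>!VS. is_minimizer n rho lam M U (fst VS) (snd VS)"
  proof (rule ex1I[of _ "(V0, S0)"])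
    show "is_minimizer n rho lam M U (fst (V0, S0)) (snd (V0, S0))"
      using min by simp
    show "VS = (V0, S0)" if "is_minimizer n rho lam M U (fst VS) (snd VS)" for VS
      using lossL_minimizer_unique[OF assms(2) less_imp_le[OF assms(3)] min that]
      by (simp add: prod_eq_iff)
  qed
  fix V S
  assume "is_minimizer n rho lam M U V S"
  moreover have "frechet_derivative (\<lambda>U'. lossL n rho lam M U' V S) (at U) = lossL_deriv n rho M U V S"
    using lossL_has_derivative by (rule frechet_derivative_at[symmetric])
  ultimately show "(gfun n rho lam M has_derivative
      frechet_derivative (\<lambda>U'. lossL n rho lam M U' V S) (at U)) (at U)"
    using gfun_has_derivative[OF assms(2,3)] by simp
  show "(\<lambda>U'. lossL n rho lam M U' V S) differentiable (at U)"
    using lossL_has_derivative by (rule differentiableI)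
qed

end
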